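(* Let $k\geq 3$ be an integer and $\ell\geq 2$ an even integer, and let $G_1^{\{\ell,k\}}$ and $G_2^{\{\ell,k\}}$ be the indistinguishability graphs (for a fixed permutation $\sigma\neq\mathrm{id}$ of $[k]$). Let $\chi_1$ and $\chi_2$ be arbitrary $k$-partial $k$-colorings of $G_1^{\{\ell,k\}}$ and $G_2^{\{\ell,k\}}$, respectively. Then (1) $\chi_1((i,1))=\chi_1((i,\ell))$ for every $i\in[k]$; and (2) there exists $j\in[k]$ with $\chi_2((j,1))\neq\chi_2((j,\ell))$.
   Context: Let $[m]=\{1,\dots,m\}$. A $k$-partial $c$-coloring of a graph $H=(V,E)$ is a map $\gamma:V\to\{1,\dots,c\}$ such that every vertex $v$ has at least $\min\{k,\deg_H(v)\}$ neighbors $u$ with $\gamma(u)\neq\gamma(v)$. Path of cliques: for permutations $\tau_1,\dots,\tau_{\ell-1}$ of $[k]$, $P(\tau_1,\dots,\tau_{\ell-1})$ has vertex set $[k]\times[\ell]$ and edges $\{(a,i),(b,i)\}$ for $a\neq b$, $i\in[\ell]$, and $\{(a,i),(b,i+1)\}$ for $i\in[\ell-1]$, $a,b\in[k]$, $b\neq\tau_i(a)$. The $k$-edge-gadget transformation: given a graph $G$ and for each edge a chosen ordered pair $(u,v)$, keep all vertices of $G$, delete each edge $\{u,v\}$, and add $k$ new vertices $(u,v,1),\dots,(u,v,k)$ forming a clique together with edges $\{u,(u,v,j)\}$ for $j=1,\dots,k-1$ and $\{v,(u,v,k)\}$. Indistinguishability graphs: let $G_1=P(\tau_1,\dots,\tau_{\ell-1})$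 with all $\tau_i=\mathrm{id}$, and $G_2=P(\tau_1',\dots,\tau_{\ell-1}')$ with $\tau_i'=\mathrm{id}$ for $i\neq \ell/2$ and $\tau'_{\ell/2}=\sigma$, where $\sigma$ is a fixed permutation of $[k]$ different from the identity. $G_1^{\{\ell,k\}}$ (resp. $G_2^{\{\ell,k\}}$) is obtained from $G_1$ (resp. $G_2$) by the $k$-edge-gadget transformation, where an edge $\{(a,i),(b,i)\}$ with $a<b$ is oriented as $((a,i),(b,i))$ and an edge $\{(a,i),(b,i+1)\}$ is oriented as $((a,i),(b,i+1))$. The vertices $(i,1)$ and $(i,\ell)$ are original vertices of the path of cliques. *)

theory Defs
  imports "HOL-Combinatorics.Permutations"
begin

definition nbrs :: "'a set \<Rightarrow> ('a \<Rightarrow> 'a \<Rightarrow> bool) \<Rightarrow> 'a \<Rightarrow> 'a set" where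
  "nbrs V adj v = {u \<in> V. adj v u}"

definition partial_coloring ::
  "'a set \<Rightarrow> ('a \<Rightarrow> 'a \<Rightarrow> bool) \<Rightarrow> nat \<Rightarrow> nat \<Rightarrow> ('a \<Rightarrow> nat) \<Rightarrow> bool" where
  "partial_coloring V adj k c \<gamma> \<longleftrightarrow>
     (\<forall>v\<in>V. \<gamma> v \<in> {1..c}) \<and>
     (\<forall>v\<in>V. card {u \<in> nbrs V adj v. \<gamma> u \<noteq> \<gamma> v} \<ge> min k (card (nbrs V adj v)))"

text \<open>Vertices of the k-edge-gadget transformation: original vertices and gadget vertices
  (u,v,j) for an oriented edge (u,v).\<close>

datatype 'a gv = Orig 'a | Gad 'a 'a nat

definition gadget_V :: "'a set \<Rightarrow> ('a \<times> 'a) set \<Rightarrow> nat \<Rightarrow> 'a gv set" where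
  "gadget_V V D k = Orig ` V \<union> {Gad u v j | u v j. (u, v) \<in> D \<and> j \<in> {1..k}}"

definition gadget_adj0 :: "('a \<times> 'a) set \<Rightarrow> nat \<Rightarrow> 'a gv \<Rightarrow> 'a gv \<Rightarrow> bool" where
  "gadget_adj0 D k x y \<longleftrightarrow>
     (\<exists>u v j j'. (u, v) \<in> D \<and> j \<in> {1..k} \<and> j' \<in> {1..k} \<and> j \<noteq> j' \<and>
                x = Gad u v j \<and> y = Gad u v j') \<or>
     (\<exists>u v j. (u, v) \<in> D \<and> j \<in> {1..k-1} \<and> x = Orig u \<and> y = Gad u v j) \<or>
     (\<exists>u v. (u, v) \<in> D \<and> x = Orig v \<and> y = Gad u v k)"

definition gadget_adj :: "('a \<times> 'a) set \<Rightarrow> nat \<Rightarrow> 'a gv \<Rightarrow> 'a gv \<Rightarrow> bool" where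
  "gadget_adj D k x y \<longleftrightarrow> gadget_adj0 D k x y \<or> gadget_adj0 D k y x"

text \<open>Path of cliques P(tau_1,...,tau_{l-1}) on [k] x [l], given by its edges with the
  orientation used in the paper (the edges of the graph are exactly the unordered
  versions of these arcs).\<close>

definition poc_V :: "nat \<Rightarrow> nat \<Rightarrow> (nat \<times> nat) set" where
  "poc_V k l = {1..k} \<times> {1..l}"

definition poc_arcs :: "nat \<Rightarrow> nat \<Rightarrow> (nat \<Rightarrow> nat \<Rightarrow> nat) \<Rightarrow> ((nat \<times> nat) \<times> (nat \<times> nat)) set" where
  "poc_arcs k l \<tau> =
     {((a, i), (b, i)) | a b i. a \<in> {1..k} \<and> b \<in> {1..k} \<and> a < b \<and> i \<in> {1..l}} \<union>
     {((a, i), (b, Suc i)) | a b i. a \<in> {1..k} \<and> b \<in> {1..k} \<and> i \<in> {1..l-1} \<and> b \<noteq> \<tau> i a}"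

definition tau1 :: "nat \<Rightarrow> nat \<Rightarrow> nat" where
  "tau1 i = id"

definition tau2 :: "nat \<Rightarrow> (nat \<Rightarrow> nat) \<Rightarrow> nat \<Rightarrow> nat \<Rightarrow> nat" where
  "tau2 l \<sigma> i = (if i = l div 2 then \<sigma> else id)"

definition G_V :: "nat \<Rightarrow> nat \<Rightarrow> (nat \<Rightarrow> nat \<Rightarrow> nat) \<Rightarrow> (nat \<times> nat) gv set" where
  "G_V l k \<tau> = gadget_V (poc_V k l) (poc_arcs k l \<tau>) k"

definition G_adj :: "nat \<Rightarrow> nat \<Rightarrow> (nat \<Rightarrow> nat \<Rightarrow> nat) \<Rightarrow> (nat \<times> nat) gv \<Rightarrow> (nat \<times> nat) gv \<Rightarrow> bool" where
  "G_adj l k \<tau> = gadget_adj (poc_arcs k l \<tau>) k"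

end

theory Submission
  imports Defs
begin

text \<open>A gadget vertex has degree exactly k, so in a k-partial k-coloring all its neighbors
  get colors different from its own. Hence the gadget of an arc (u,v) is a k-clique using
  all k colors; u sees every gadget vertex except (u,v,k), so u has the color of (u,v,k),
  which differs from that of v. Thus the original vertices carry a proper k-coloring of the
  path of cliques. In such a coloring each layer uses all k colors, and (a,i) is adjacent
  to every vertex of layer i+1 except (tau_i(a), i+1), so both have the same color.
  Colours therefore travel along the permutations: in G_1 every row keeps its color,
  while in G_2 the row j with sigma(j) \<noteq> j ends in layer l with the color of row
  sigma(j), which differs from the color of row j there.\<close>

lemma partial_coloring_nbr_color_differs:
  assumes "partial_coloring V adj k c \<chi>" and "x \<in> V"
    and "finite (nbrs V adj x)" and "card (nbrs V adj x) \<le> k"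
    and "y \<in> nbrs V adj x"
  shows "\<chi> y \<noteq> \<chi> x"
proof -
  let ?S = "{u \<in> nbrs V adj x. \<chi> u \<noteq> \<chi> x}"
  have "min k (card (nbrs V adj x)) \<le> card ?S"
    using assms(1,2) unfolding partial_coloring_def by blast
  then have "card (nbrs V adj x) \<le> card ?S"
    using assms(4) by (simp add: min_absorb2)
  moreover have "?S \<subseteq> nbrs V adj x" by blast
  ultimately have "?S = nbrs V adj x"
    using assms(3) card_seteq by blast
  then show ?thesis using assms(5) by blast
qed

lemma partial_coloring_range:
  "partial_coloring V adj k c \<chi> \<Longrightarrow> x \<in> V \<Longrightarrow> \<chi> x \<in> {1..c}"
  unfolding partial_coloring_def by blast

lemma Orig_in_gadget_V: "v \<in> V \<Longrightarrow> Orig v \<in> gadget_V V D k"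
  unfolding gadget_V_def by blast

lemma Gad_in_gadget_V: "(u, v) \<in> D \<Longrightarrow> j \<in> {1..k} \<Longrightarrow> Gad u v j \<in> gadget_V V D k"
  unfolding gadget_V_def by blast

lemma gadget_adj_Gad:
  assumes "(u, v) \<in> D" and "j \<in> {1..k}"
  shows "gadget_adj D k (Gad u v j) y \<longleftrightarrow>
           y = Orig (if j < k then u else v) \<or> (\<exists>j'\<in>{1..k}. j' \<noteq> j \<and> y = Gad u v j')"
  using assms unfolding gadget_adj_def gadget_adj0_def
  by (cases y) (auto simp: less_Suc_eq_le)

lemma nbrs_Gad:
  assumes "(u, v) \<in> D" and "u \<in> V" and "v \<in> V" and "j \<in> {1..k}"
  shows "nbrs (gadget_V V D k) (gadget_adj D k) (Gad u v j) =
           insert (Orig (if j < k then u else v)) (Gad u v ` ({1..k} - {j}))"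
  using assms unfolding nbrs_def gadget_adj_Gad[OF assms(1,4)]
  by (auto simp: gadget_V_def)

lemma gadget_partial_coloring_separates_arc:
  assumes pc: "partial_coloring (gadget_V V D k) (gadget_adj D k) k k \<chi>"
    and uv: "(u, v) \<in> D" and "u \<in> V" and "v \<in> V" and "0 < k"
  shows "\<chi> (Orig u) \<noteq> \<chi> (Orig v)"
proof -
  let ?W = "gadget_V V D k" and ?g = "\<lambda>j. \<chi> (Gad u v j)"
  note Gad_in = Gad_in_gadget_V[OF uv]
  have apart: "\<chi> y \<noteq> ?g j"
    if j: "j \<in> {1..k}" and "y \<in> insert (Orig (if j < k then u else v)) (Gad u v ` ({1..k} - {j}))"
    for j y
  proof (rule partial_coloring_nbr_color_differs[OF pc Gad_in[OF j]])
    note N = nbrs_Gad[OF uv \<open>u \<in> V\<close> \<open>v \<in> V\<close> j]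
    show "finite (nbrs ?W (gadget_adj D k) (Gad u v j))" unfolding N by simp
    have "card (Gad u v ` ({1..k} - {j})) \<le> k - 1"
      using card_image_le[of "{1..k} - {j}" "Gad u v"] j by simp
    then show "card (nbrs ?W (gadget_adj D k) (Gad u v j)) \<le> k"
      unfolding N by (rule card_insert_le_m1[OF \<open>0 < k\<close>])
    show "y \<in> nbrs ?W (gadget_adj D k) (Gad u v j)" unfolding N by fact
  qed
  have "inj_on ?g {1..k}"
  proof (rule inj_onI, rule ccontr)
    fix i i' assume "i \<in> {1..k}" "i' \<in> {1..k}" "?g i = ?g i'" "i \<noteq> i'"
    then show False using apart[of i "Gad u v i'"] by auto
  qed
  moreover have "?g ` {1..k} \<subseteq> {1..k}"
    using partial_coloring_range[OF pc Gad_in] by auto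
  ultimately have onto: "?g ` {1..k} = {1..k}"
    by (simp add: endo_inj_surj)
  have "\<chi> (Orig u) \<in> ?g ` {1..k}"
    unfolding onto using partial_coloring_range[OF pc Orig_in_gadget_V] \<open>u \<in> V\<close> by blast
  then obtain j where j: "j \<in> {1..k}" and uj: "\<chi> (Orig u) = ?g j"
    by blast
  have "j = k"
    using apart[OF j, of "Orig u"] uj j by (cases "j < k") auto
  moreover have "\<chi> (Orig v) \<noteq> ?g k"
    using apart[of k "Orig v"] \<open>0 < k\<close> by simp
  ultimately show ?thesis using uj by simp
qed

definition proper_poc_coloring ::
  "nat \<Rightarrow> nat \<Rightarrow> (nat \<Rightarrow> nat \<Rightarrow> nat) \<Rightarrow> (nat \<times> nat \<Rightarrow> nat) \<Rightarrow> bool" where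
  "proper_poc_coloring k l \<tau> f \<longleftrightarrow>
     (\<forall>x\<in>poc_V k l. f x \<in> {1..k}) \<and> (\<forall>(x, y)\<in>poc_arcs k l \<tau>. f x \<noteq> f y)"

lemma proper_poc_coloringD:
  assumes "proper_poc_coloring k l \<tau> f"
  shows proper_poc_coloring_range: "x \<in> poc_V k l \<Longrightarrow> f x \<in> {1..k}"
    and proper_poc_coloring_arc: "(x, y) \<in> poc_arcs k l \<tau> \<Longrightarrow> f x \<noteq> f y"
  using assms unfolding proper_poc_coloring_def by blast+

lemma poc_arc_in_layer:
  "a \<in> {1..k} \<Longrightarrow> b \<in> {1..k} \<Longrightarrow> a < b \<Longrightarrow> i \<in> {1..l} \<Longrightarrow> ((a, i), (b, i)) \<in> poc_arcs k l \<tau>"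
  unfolding poc_arcs_def by blast

lemma poc_arc_between_layers:
  "a \<in> {1..k} \<Longrightarrow> b \<in> {1..k} \<Longrightarrow> i \<in> {1..l-1} \<Longrightarrow> b \<noteq> \<tau> i a \<Longrightarrow>
     ((a, i), (b, Suc i)) \<in> poc_arcs k l \<tau>"
  unfolding poc_arcs_def by blast

lemma poc_arc_endpoints_in_poc_V: "(x, y) \<in> poc_arcs k l \<tau> \<Longrightarrow> x \<in> poc_V k l \<and> y \<in> poc_V k l"
  unfolding poc_arcs_def poc_V_def by auto

lemma partial_coloring_G_imp_proper_poc_coloring:
  assumes pc: "partial_coloring (G_V l k \<tau>) (G_adj l k \<tau>) k k \<chi>" and "0 < k"
  shows "proper_poc_coloring k l \<tau> (\<lambda>x. \<chi> (Orig x))"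
proof -
  note pc' = pc[unfolded G_V_def G_adj_def]
  have "\<chi> (Orig x) \<in> {1..k}" if "x \<in> poc_V k l" for x
    by (rule partial_coloring_range[OF pc' Orig_in_gadget_V[OF that]])
  moreover have "\<chi> (Orig x) \<noteq> \<chi> (Orig y)" if xy: "(x, y) \<in> poc_arcs k l \<tau>" for x y
    using poc_arc_endpoints_in_poc_V[OF xy] gadget_partial_coloring_separates_arc[OF pc' xy _ _ \<open>0 < k\<close>]
    by blast
  ultimately show ?thesis
    unfolding proper_poc_coloring_def by blast
qed

lemma proper_poc_coloring_layer_inj:
  assumes f: "proper_poc_coloring k l \<tau> f" and "i \<in> {1..l}"
  shows "inj_on (\<lambda>a. f (a, i)) {1..k}"
proof (rule inj_onI, rule ccontr)
  fix a b assume ab: "a \<in> {1..k}" "b \<in> {1..k}" "f (a, i) = f (b, i)" "a \<noteq> b"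
  then have "a < b \<or> b < a" by arith
  then show False
    using proper_poc_coloring_arc[OF f poc_arc_in_layer] ab \<open>i \<in> {1..l}\<close> by metis
qed

lemma proper_poc_coloring_layer_step:
  assumes f: "proper_poc_coloring k l \<tau> f" and i: "i \<in> {1..l-1}"
    and a: "a \<in> {1..k}" and "\<tau> i a \<in> {1..k}"
  shows "f (a, i) = f (\<tau> i a, Suc i)"
proof -
  let ?g = "\<lambda>b. f (b, Suc i)"
  have "inj_on ?g {1..k}"
    using proper_poc_coloring_layer_inj[OF f, of "Suc i"] i by auto
  moreover have "?g ` {1..k} \<subseteq> {1..k}"
    using proper_poc_coloring_range[OF f] i unfolding poc_V_def by auto
  ultimately have onto: "?g ` {1..k} = {1..k}"
    by (simp add: endo_inj_surj)
  have "f (a, i) \<in> ?g ` {1..k}"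
    unfolding onto using proper_poc_coloring_range[OF f] a i unfolding poc_V_def by auto
  then obtain b where b: "b \<in> {1..k}" and ab: "f (a, i) = ?g b"
    by blast
  have "b = \<tau> i a"
    using proper_poc_coloring_arc[OF f poc_arc_between_layers[OF a b i]] ab by blast
  then show ?thesis using ab by simp
qed

lemma proper_poc_coloring_id_layers:
  assumes f: "proper_poc_coloring k l \<tau> f" and "1 \<le> m" and "m \<le> n" and "n \<le> l"
    and id: "\<And>i. m \<le> i \<Longrightarrow> i < n \<Longrightarrow> \<tau> i = id" and a: "a \<in> {1..k}"
  shows "f (a, m) = f (a, n)"
  using \<open>m \<le> n\<close> \<open>n \<le> l\<close> id
proof (induction n rule: dec_induct)
  case base
  then show ?case by simp
next
  case (step n)
  then have "f (a, n) = f (\<tau> n a, Suc n)"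
    using proper_poc_coloring_layer_step[OF f _ a] a \<open>1 \<le> m\<close> by simp
  with step show ?case by simp
qed

theorem fact1:
  fixes k l :: nat and \<sigma> :: "nat \<Rightarrow> nat" and \<chi>1 \<chi>2 :: "(nat \<times> nat) gv \<Rightarrow> nat"
  assumes "k \<ge> 3" and "l \<ge> 2" and "even l"
    and "\<sigma> permutes {1..k}" and "\<sigma> \<noteq> id"
    and "partial_coloring (G_V l k tau1) (G_adj l k tau1) k k \<chi>1"
    and "partial_coloring (G_V l k (tau2 l \<sigma>)) (G_adj l k (tau2 l \<sigma>)) k k \<chi>2"
  shows "(\<forall>i\<in>{1..k}. \<chi>1 (Orig (i, 1)) = \<chi>1 (Orig (i, l))) \<and>
         (\<exists>j\<in>{1..k}. \<chi>2 (Orig (j, 1)) \<noteq> \<chi>2 (Orig (j, l)))"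
proof
  have "0 < k" using assms(1) by simp
  note f1 = partial_coloring_G_imp_proper_poc_coloring[OF assms(6) \<open>0 < k\<close>]
  note f2 = partial_coloring_G_imp_proper_poc_coloring[OF assms(7) \<open>0 < k\<close>]
  show "\<forall>i\<in>{1..k}. \<chi>1 (Orig (i, 1)) = \<chi>1 (Orig (i, l))"
    using proper_poc_coloring_id_layers[OF f1] assms(2) by (simp add: tau1_def)
  obtain j where "\<sigma> j \<noteq> j" using assms(5) by (metis eq_id_iff)
  then have j: "j \<in> {1..k}"
    using assms(4) by (meson permutes_not_in)
  then have \<sigma>j: "\<sigma> j \<in> {1..k}"
    using permutes_in_image[OF assms(4)] by blast
  define h where "h = l div 2"
  have h: "1 \<le> h" "h < l" using assms(2,3) unfolding h_def by auto
  have "\<chi>2 (Orig (j, 1)) = \<chi>2 (Orig (j, h))"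
    using proper_poc_coloring_id_layers[OF f2 _ _ _ _ j] h by (simp add: tau2_def h_def)
  also have "\<dots> = \<chi>2 (Orig (\<sigma> j, Suc h))"
    using proper_poc_coloring_layer_step[OF f2 _ j] \<sigma>j h by (simp add: tau2_def h_def)
  also have "\<dots> = \<chi>2 (Orig (\<sigma> j, l))"
    using proper_poc_coloring_id_layers[OF f2 _ _ _ _ \<sigma>j] h by (simp add: tau2_def h_def)
  also have "\<dots> \<noteq> \<chi>2 (Orig (j, l))"
    using proper_poc_coloring_layer_inj[OF f2, of l] \<open>\<sigma> j \<noteq> j\<close> j \<sigma>j h
    by (auto dest: inj_onD)
  finally show "\<exists>j\<in>{1..k}. \<chi>2 (Orig (j, 1)) \<noteq> \<chi>2 (Orig (j, l))"
    using j by blast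
qed

end
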